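(* Let $n\ge 1$ and for $R>0$ let $P_n(R)$ be the set of monic degree-$n$ polynomials with integer coefficients having a real root $\lambda>1$ with all other roots strictly smaller than $\lambda$ in absolute value, and all of whose roots have absolute value at most $R$. Then $$\lim_{R\to\infty}\frac{|\{p\in P_n(R): p \text{ is reducible over }\mathbb{Z}\}|}{|P_n(R)|}=0.$$
   Context: $|A|$ denotes the cardinality of a finite set $A$. *)

theory Defs
  imports "HOL-Analysis.Analysis" "HOL-Computational_Algebra.Computational_Algebra"
begin

text \<open>P_n(R): monic integer polynomials of degree n having a real root l > 1 which is
  simple (so that every other root, counted with multiplicity, is different from l) and
  all other complex roots have absolute value < l; and all complex roots have modulus at most R.\<close>

definition perron_polys :: "nat \<Rightarrow> real \<Rightarrow> int poly set" where
  "perron_polys n R = {p. lead_coeff p = 1 \<and> degree p = n \<and>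
     (\<exists>l::real. l > 1 \<and> poly (map_poly complex_of_int p) (complex_of_real l) = 0 \<and>
        order (complex_of_real l) (map_poly complex_of_int p) = 1 \<and>
        (\<forall>z. poly (map_poly complex_of_int p) z = 0 \<and> z \<noteq> complex_of_real l \<longrightarrow> cmod z < l)) \<and>
     (\<forall>z. poly (map_poly complex_of_int p) z = 0 \<longrightarrow> cmod z \<le> R)}"

end

theory Submission
  imports Defs
begin

text \<open>A reducible \<open>p \<in> P_n(R)\<close> splits into monic integer factors of degrees \<open>k, n - k \<ge> 1\<close>
  whose roots are again bounded by \<open>R\<close>. The \<open>j\<close>-th coefficient of a monic degree-\<open>k\<close>
  polynomial with roots in the disc of radius \<open>R\<close> is at most \<open>binomial k j * R^(k-j)\<close>, so there are
  \<open>O(R^(k(k+1)/2))\<close> such polynomials, and since \<open>k(k+1)/2 + (n-k)(n-k+1)/2 = n(n+1)/2 - k(n-k)\<close>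
  at most \<open>O(R^(n(n+1)/2 - 1))\<close> reducible ones.

  Conversely, for \<open>n = m + 2\<close> every \<open>x^n - a x^(n-1) + \<Sum>i\<le>m. c_i x^i\<close> with
  \<open>R/4 \<le> a \<le> R/2\<close> and \<open>|c_i| \<le> a^(n-i) / K\<close> (for a suitable constant \<open>K\<close> depending on \<open>m\<close>) is a small
  perturbation of \<open>x^(n-1) (x - a)\<close>: it has a simple real root near \<open>a\<close>, which is its only root of
  modulus \<open>\<ge> a/2\<close>. These polynomials already give \<open>|P_n(R)| \<ge> c R^(n(n+1)/2)\<close>, so the ratio is
  \<open>O(1/R)\<close>. For \<open>n = 1\<close> there is nothing to count: monic linear polynomials are irreducible.\<close>

section \<open>Monic integer polynomials with bounded roots\<close>

lemma norm_coeff_prod_linear_le: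
  fixes r :: "nat \<Rightarrow> 'a::real_normed_field" and R :: real
  assumes "R \<ge> 0" "\<And>i. i < k \<Longrightarrow> norm (r i) \<le> R"
  shows "R^j * norm (coeff (\<Prod>i<k. [:-r i, 1:]) j) \<le> (k choose j) * R^k"
  using assms(2)
proof (induction k arbitrary: j)
  case 0
  then show ?case by (cases j) auto
next
  case (Suc k)
  define Q where "Q = (\<Prod>i<k. [:-r i, 1:])"
  have IH: "R^j * norm (coeff Q j) \<le> (k choose j) * R^k" for j
    using Suc by (simp add: Q_def)
  have rk: "norm (r k) \<le> R" using Suc.prems by simp
  have prod: "(\<Prod>i<Suc k. [:-r i, 1:]) = smult (-r k) Q + pCons 0 Q"
    by (simp add: Q_def mult.commute)
  have shift: "R^j * norm (- r k * coeff Q j) \<le> R * ((k choose j) * R^k)"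
  proof -
    have "R^j * norm (- r k * coeff Q j) = norm (r k) * (R^j * norm (coeff Q j))"
      by (simp add: norm_mult)
    also have "\<dots> \<le> R * ((k choose j) * R^k)"
      by (rule mult_mono[OF rk IH[of j] assms(1)]) (simp add: assms(1))
    finally show ?thesis .
  qed
  show ?case
  proof (cases j)
    case 0
    then show ?thesis using shift unfolding prod by simp
  next
    case (Suc j')
    have "R^j * norm (coeff (\<Prod>i<Suc k. [:-r i, 1:]) j)
        \<le> R^j * norm (- r k * coeff Q j) + R * (R^j' * norm (coeff Q j'))"
    proof -
      have "coeff (\<Prod>i<Suc k. [:-r i, 1:]) j = - r k * coeff Q j + coeff Q j'"
        unfolding prod using Suc by simp
      then have "norm (coeff (\<Prod>i<Suc k. [:-r i, 1:]) j) \<le> norm (- r k * coeff Q j) + norm (coeff Q j')"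
        by (metis norm_triangle_ineq)
      from mult_left_mono[OF this, of "R^j"] show ?thesis
        using Suc assms(1) by (simp add: algebra_simps)
    qed
    also have "\<dots> \<le> R * ((k choose j) * R^k) + R * ((k choose j') * R^k)"
      using shift IH[of j'] assms(1) by (intro add_mono mult_left_mono) auto
    also have "\<dots> = (Suc k choose j) * R^Suc k"
      using Suc by (simp add: algebra_simps)
    finally show ?thesis .
  qed
qed

definition root_bounded_monics :: "nat \<Rightarrow> real \<Rightarrow> int poly set" where
  "root_bounded_monics k R = {f. lead_coeff f = 1 \<and> degree f = k \<and>
     (\<forall>z. poly (map_poly complex_of_int f) z = 0 \<longrightarrow> cmod z \<le> R)}"

lemma perron_polys_subset_root_bounded_monics: "perron_polys n R \<subseteq> root_bounded_monics n R"
  unfolding perron_polys_def root_bounded_monics_def by auto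

lemma abs_coeff_root_bounded_monic_le:
  fixes R :: real
  assumes f: "f \<in> root_bounded_monics k R" and R: "R > 0" and j: "j \<le> k"
  shows "\<bar>real_of_int (coeff f j)\<bar> \<le> 2^k * R^(k-j)"
proof -
  define F where "F = map_poly complex_of_int f"
  have deg: "degree F = k" and lead: "lead_coeff F = 1"
    using f unfolding F_def root_bounded_monics_def by (auto simp: degree_map_poly coeff_map_poly)
  obtain root where "smult (lead_coeff F) (\<Prod>i<degree F. [:-root i, 1:]) = F"
    using complex_poly_decompose' by blast
  then have F: "F = (\<Prod>i<k. [:-root i, 1:])" using deg lead by simp
  have "cmod (root i) \<le> R" if "i < k" for i
  proof -
    have "poly F (root i) = 0" unfolding F poly_prod using that by (intro prod_zero) auto
    then show ?thesis using f unfolding root_bounded_monics_def F_def by auto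
  qed
  then have "R^j * cmod (coeff F j) \<le> (k choose j) * R^k"
    unfolding F using R by (intro norm_coeff_prod_linear_le) auto
  also have "\<dots> \<le> 2^k * R^k" using R binomial_le_pow2[of k j] by (intro mult_right_mono) auto
  also have "\<dots> = R^j * (2^k * R^(k-j))" using j by (simp add: power_add [symmetric])
  finally have "cmod (coeff F j) \<le> 2^k * R^(k-j)" using R by simp
  then show ?thesis unfolding F_def by (simp add: coeff_map_poly)
qed

lemma finite_card_root_bounded_monics:
  fixes R :: real
  assumes R: "R \<ge> 1"
  shows "finite (root_bounded_monics k R) \<and>
    card (root_bounded_monics k R) \<le> (3*2^k)^k * R^(\<Sum>j<k. k-j)"
proof -
  define b where "b j = \<lfloor>2^k * R^(k-j)\<rfloor>" for j
  define box where "box = (\<Pi>\<^sub>E j\<in>{..<k}. {-b j..b j})"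
  define low_coeffs where "low_coeffs f = restrict (coeff f) {..<k}" for f :: "int poly"
  have inj: "inj_on low_coeffs (root_bounded_monics k R)"
  proof (rule inj_onI, rule poly_eqI)
    fix f g i assume f: "f \<in> root_bounded_monics k R" and g: "g \<in> root_bounded_monics k R"
      and eq: "low_coeffs f = low_coeffs g"
    show "coeff f i = coeff g i"
    proof (cases "i < k")
      case True
      then show ?thesis using fun_cong[OF eq, of i] unfolding low_coeffs_def by simp
    next
      case False
      then show ?thesis using f g unfolding root_bounded_monics_def
        by (cases "i = k") (auto simp: coeff_eq_0)
    qed
  qed
  have into_box: "low_coeffs ` root_bounded_monics k R \<subseteq> box"
  proof clarify
    fix f assume f: "f \<in> root_bounded_monics k R"
    have "coeff f j \<in> {-b j..b j}" if "j < k" for j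
      using abs_coeff_root_bounded_monic_le[OF f, of j] R that
      unfolding b_def by (simp add: abs_le_iff le_floor_iff minus_le_iff)
    then show "low_coeffs f \<in> box" unfolding low_coeffs_def box_def by auto
  qed
  have finite_box: "finite box" unfolding box_def by (intro finite_PiE) auto
  have "card (root_bounded_monics k R) \<le> card box"
    using card_inj_on_le[OF inj into_box finite_box] .
  also have "card box = (\<Prod>j<k. nat (2 * b j + 1))" unfolding box_def
    by (subst card_PiE) (auto intro!: prod.cong)
  finally have "real (card (root_bounded_monics k R)) \<le> (\<Prod>j<k. real (nat (2 * b j + 1)))"
    by (metis of_nat_le_iff of_nat_prod)
  also have "\<dots> \<le> (\<Prod>j<k. 3 * (2^k * R^(k-j)))"
  proof (rule prod_mono)
    fix j
    define x where "x = 2^k * R^(k-j)"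
    have "1 \<le> x" unfolding x_def using R by (meson one_le_numeral one_le_power mult_ge1_I)
    moreover have "real_of_int (b j) \<le> x" "b j \<ge> 0"
      using \<open>1 \<le> x\<close> unfolding b_def x_def by auto
    ultimately show "0 \<le> real (nat (2 * b j + 1)) \<and> real (nat (2 * b j + 1)) \<le> 3 * x"
      by simp
  qed
  also have "\<dots> = (3*2^k)^k * R^(\<Sum>j<k. k-j)"
    by (simp add: prod.distrib power_sum)
  finally show ?thesis using inj_on_finite[OF inj into_box finite_box] by simp
qed

lemma two_times_sum_lessThan_diff: "2 * (\<Sum>j<k. k - j) = k * (k + 1 :: nat)"
  by (induction k) (simp_all add: sum.lessThan_Suc_shift del: sum.lessThan_Suc)

lemma sum_lessThan_diff_add:
  "(\<Sum>j<k+l. k + l - j :: nat) = (\<Sum>j<k. k - j) + (\<Sum>j<l. l - j) + k * l"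
proof -
  have "2 * (\<Sum>j<k+l. k + l - j) = 2 * ((\<Sum>j<k. k - j) + (\<Sum>j<l. l - j) + k * l)"
    unfolding add_mult_distrib2 two_times_sum_lessThan_diff by (simp add: algebra_simps)
  then show ?thesis by simp
qed

lemma map_poly_of_int_mult:
  "map_poly (of_int :: int \<Rightarrow> 'a::comm_ring_1) (p * q) = map_poly of_int p * map_poly of_int q"
  by (rule poly_eqI) (simp add: coeff_map_poly coeff_mult)

lemma reducible_monic_int_poly_factor:
  fixes p :: "int poly"
  assumes lead: "lead_coeff p = 1" and deg: "degree p \<noteq> 0" and red: "\<not> irreducible p"
  obtains f g where "p = f * g" "lead_coeff f = 1" "lead_coeff g = 1" "degree f \<noteq> 0" "degree g \<noteq> 0"
proof -
  have "p \<noteq> 0" using lead by auto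
  moreover have "\<not> p dvd 1" using deg by (auto simp: is_unit_poly_iff)
  ultimately obtain a b where ab: "p = a * b" and a: "\<not> a dvd 1" and b: "\<not> b dvd 1"
    using red unfolding irreducible_def by blast
  have "lead_coeff a * lead_coeff b = 1" using lead ab by (simp add: lead_coeff_mult)
  then obtain u where u: "u * u = 1" "lead_coeff a = u" "lead_coeff b = u"
    using zmult_eq_1_iff by metis
  \<comment> \<open>a unit constant factor would be a unit polynomial\<close>
  have "degree a \<noteq> 0" "degree b \<noteq> 0"
    using a b u by (metis degree_eq_zeroE dvdI is_unit_poly_iff lead_coeff_pCons(2))+
  moreover have "u \<noteq> 0" using u by auto
  ultimately show ?thesis
    using that[of "smult u a" "smult u b"] ab u by (simp add: mult.assoc)
qed

lemma root_bounded_monics_factor: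
  assumes "f * g \<in> root_bounded_monics n R" "lead_coeff f = 1"
  shows "f \<in> root_bounded_monics (degree f) R"
  using assms unfolding root_bounded_monics_def by (auto simp: map_poly_of_int_mult)

lemma card_reducible_root_bounded_monics_le:
  fixes R :: real
  assumes R: "R \<ge> 1" and n: "n \<ge> 1"
  shows "card {p \<in> root_bounded_monics n R. \<not> irreducible p}
     \<le> (\<Sum>k\<in>{1..<n}. (3*2^k)^k * (3*2^(n-k))^(n-k)) * R^((\<Sum>j<n. n - j) - 1)"
proof -
  let ?B = "\<lambda>k. root_bounded_monics k R"
  define U where "U = (\<Union>k\<in>{1..<n}. (\<lambda>(f, g). f * g) ` (?B k \<times> ?B (n-k)))"
  have "{p \<in> ?B n. \<not> irreducible p} \<subseteq> U"
  proof clarify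
    fix p assume p: "p \<in> ?B n" and "\<not> irreducible p"
    moreover have "lead_coeff p = 1" "degree p = n" using p unfolding root_bounded_monics_def by auto
    ultimately obtain f g where fg: "p = f * g" "lead_coeff f = 1" "lead_coeff g = 1"
        "degree f \<noteq> 0" "degree g \<noteq> 0"
      using n reducible_monic_int_poly_factor by (metis not_one_le_zero)
    have "degree f + degree g = n"
      using fg \<open>degree p = n\<close> by (metis degree_mult_eq leading_coeff_0_iff zero_neq_one)
    moreover have "f \<in> ?B (degree f)" "g \<in> ?B (degree g)"
      using p fg root_bounded_monics_factor[of f g] root_bounded_monics_factor[of g f]
      by (auto simp: mult.commute)
    ultimately show "p \<in> U" unfolding U_def using fg by force
  qed
  moreover have finite_B: "finite (?B k)" for k using finite_card_root_bounded_monics[OF R] by blast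
  ultimately have "card {p \<in> ?B n. \<not> irreducible p} \<le> card U"
    unfolding U_def by (intro card_mono) auto
  also have "\<dots> \<le> (\<Sum>k\<in>{1..<n}. card (?B k) * card (?B (n-k)))"
    unfolding U_def
    by (rule order.trans[OF card_UN_le], simp, rule sum_mono)
       (metis card_image_le card_cartesian_product finite_B finite_cartesian_product)
  finally have "real (card {p \<in> ?B n. \<not> irreducible p})
      \<le> (\<Sum>k\<in>{1..<n}. real (card (?B k)) * real (card (?B (n-k))))"
    by (metis (no_types, lifting) of_nat_le_iff of_nat_mult of_nat_sum sum.cong)
  also have "\<dots> \<le> (\<Sum>k\<in>{1..<n}. ((3*2^k)^k * (3*2^(n-k))^(n-k)) * R^((\<Sum>j<n. n - j) - 1))"
  proof (rule sum_mono)
    fix k assume k: "k \<in> {1..<n}"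
    define e where "e k = (\<Sum>j<k. k - j)" for k :: nat
    have "e n = e k + e (n-k) + k * (n-k)"
      using sum_lessThan_diff_add[of k "n-k"] k unfolding e_def by simp
    moreover have "k * (n-k) \<ge> 1" using k by (simp add: Suc_le_eq)
    ultimately have exp: "e k + e (n-k) \<le> e n - 1" by linarith
    have "real (card (?B k)) * real (card (?B (n-k)))
       \<le> ((3*2^k)^k * R^(e k)) * ((3*2^(n-k))^(n-k) * R^(e (n-k)))"
      using finite_card_root_bounded_monics[OF R, of k] finite_card_root_bounded_monics[OF R, of "n-k"]
      unfolding e_def by (intro mult_mono) auto
    also have "\<dots> = ((3*2^k)^k * (3*2^(n-k))^(n-k)) * R^(e k + e (n-k))"
      by (simp add: power_add)
    also have "\<dots> \<le> ((3*2^k)^k * (3*2^(n-k))^(n-k)) * R^(e n - 1)"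
      using exp R by (intro mult_left_mono power_increasing) auto
    finally show "real (card (?B k)) * real (card (?B (n-k)))
       \<le> ((3*2^k)^k * (3*2^(n-k))^(n-k)) * R^((\<Sum>j<n. n - j) - 1)"
      unfolding e_def .
  qed
  also have "\<dots> = (\<Sum>k\<in>{1..<n}. (3*2^k)^k * (3*2^(n-k))^(n-k)) * R^((\<Sum>j<n. n - j) - 1)"
    by (simp add: sum_distrib_right)
  finally show ?thesis .
qed

section \<open>Small perturbations of \<open>x^(m+1) (x - a)\<close>\<close>

definition tail_bound :: "nat \<Rightarrow> real" where
  "tail_bound m = 128 * (real m + 1)^2 * 2^(m+2)"

definition small_tail :: "nat \<Rightarrow> real \<Rightarrow> (nat \<Rightarrow> real) \<Rightarrow> bool" where
  "small_tail m a c \<longleftrightarrow> a > 0 \<and> (\<forall>i\<le>m. \<bar>c i\<bar> \<le> a^(Suc (Suc m) - i) / tail_bound m)"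

definition perron_eval :: "nat \<Rightarrow> real \<Rightarrow> (nat \<Rightarrow> real) \<Rightarrow> 'a::real_normed_field \<Rightarrow> 'a" where
  "perron_eval m a c z = z^Suc (Suc m) - of_real a * z^Suc m + (\<Sum>i\<le>m. of_real (c i) * z^i)"

lemma perron_eval_of_real: "perron_eval m a c (of_real x) = of_real (perron_eval m a c x)"
  unfolding perron_eval_def by simp

lemma tail_bound_pos: "tail_bound m > 0"
  unfolding tail_bound_def by simp

lemma small_tail_term_le:
  assumes tail: "small_tail m a c" and r: "a \<le> 2 * r" and i: "i \<le> m"
  shows "\<bar>c i\<bar> * r^i \<le> a * 2^(m+2) * r^(m+1) / tail_bound m"
proof -
  have a: "a > 0" and c: "\<bar>c i\<bar> \<le> a^(Suc (Suc m) - i) / tail_bound m"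
    using tail i unfolding small_tail_def by auto
  have r0: "r \<ge> 0" using a r by simp
  have "a^(Suc (Suc m) - i) * r^i = a * (a^(Suc m - i) * r^i)"
    using i by (simp add: Suc_diff_le)
  also have "\<dots> \<le> a * ((2*r)^(Suc m - i) * r^i)"
    using a r r0 by (intro mult_left_mono mult_right_mono power_mono) auto
  also have "\<dots> = a * (2^(Suc m - i) * r^(m+1))"
    using i by (simp add: power_mult_distrib mult.assoc flip: power_add)
  also have "\<dots> \<le> a * (2^(m+2) * r^(m+1))"
    using a r0 by (intro mult_left_mono mult_right_mono power_increasing) auto
  finally have "a^(Suc (Suc m) - i) * r^i \<le> a * 2^(m+2) * r^(m+1)" by (simp add: mult.assoc)
  moreover have "\<bar>c i\<bar> * r^i \<le> a^(Suc (Suc m) - i) / tail_bound m * r^i"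
    using c r0 by (intro mult_right_mono) auto
  ultimately show ?thesis using tail_bound_pos[of m]
    by (smt (verit) divide_right_mono mult.commute times_divide_eq_right)
qed

lemma small_tail_sum_le:
  assumes tail: "small_tail m a c" and r: "a \<le> 2 * r"
  shows "(real m + 1) * (\<Sum>i\<le>m. \<bar>c i\<bar> * r^i) \<le> a * r^(m+1) / 128"
proof -
  have "(\<Sum>i\<le>m. \<bar>c i\<bar> * r^i) \<le> (\<Sum>i\<le>m. a * 2^(m+2) * r^(m+1) / tail_bound m)"
    using small_tail_term_le[OF tail r] by (intro sum_mono) auto
  also have "\<dots> = (real m + 1) * (a * 2^(m+2) * r^(m+1) / tail_bound m)"
    by simp
  finally have "(\<Sum>i\<le>m. \<bar>c i\<bar> * r^i) \<le> (real m + 1) * (a * 2^(m+2) * r^(m+1) / tail_bound m)" .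
  then have "(real m + 1) * (\<Sum>i\<le>m. \<bar>c i\<bar> * r^i)
      \<le> (real m + 1) * ((real m + 1) * (a * 2^(m+2) * r^(m+1) / tail_bound m))"
    by (rule mult_left_mono) simp
  also have "\<dots> = a * r^(m+1) / 128"
  proof -
    have "(real m + 1) * ((real m + 1) * (a * 2^(m+2) * r^(m+1) / tail_bound m))
        = a * r^(m+1) * ((real m + 1)^2 * 2^(m+2) / tail_bound m)"
      by (simp add: power2_eq_square)
    then show ?thesis unfolding tail_bound_def by simp
  qed
  finally show ?thesis .
qed

lemma norm_small_tail_le:
  fixes z :: "'a::real_normed_field"
  assumes tail: "small_tail m a c" and z: "a \<le> 2 * norm z"
  shows "norm (\<Sum>i\<le>m. of_real (c i) * z^i) \<le> a * norm z^(m+1) / 128"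
proof -
  have "norm (\<Sum>i\<le>m. of_real (c i) * z^i) \<le> (\<Sum>i\<le>m. \<bar>c i\<bar> * norm z^i)"
    by (rule order.trans[OF norm_sum]) (simp add: norm_mult norm_power)
  also have "\<dots> \<le> (real m + 1) * (\<Sum>i\<le>m. \<bar>c i\<bar> * norm z^i)"
    using sum_nonneg[of "{..m}" "\<lambda>i. \<bar>c i\<bar> * norm z^i"] by (simp add: algebra_simps)
  also have "\<dots> \<le> a * norm z^(m+1) / 128"
    by (rule small_tail_sum_le[OF tail z])
  finally show ?thesis .
qed

lemma perron_eval_real_root:
  assumes tail: "small_tail m a c"
  obtains l :: real where "7*a/8 \<le> l" "l \<le> 9*a/8" "perron_eval m a c l = 0"
proof -
  have a: "a > 0" using tail unfolding small_tail_def by auto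
  \<comment> \<open>the tail is too small to change the sign of \<open>x^(m+1) * (x - a)\<close> at \<open>x = (1 \<plusminus> 1/8) a\<close>\<close>
  have expand: "perron_eval m a c x = x^(m+1) * (x - a) + (\<Sum>i\<le>m. c i * x^i)"
    and tail_le: "\<bar>\<Sum>i\<le>m. c i * x^i\<bar> \<le> a * x^(m+1) / 128"
    if "a \<le> 2 * x" for x :: real
    using norm_small_tail_le[OF tail, of x] that a
    by (auto simp: perron_eval_def algebra_simps)
  have "perron_eval m a c (7*a/8) \<le> 0"
    using expand[of "7*a/8"] tail_le[of "7*a/8"] a by (simp add: algebra_simps)
  moreover have "perron_eval m a c (9*a/8) \<ge> 0"
    using expand[of "9*a/8"] tail_le[of "9*a/8"] a by (simp add: algebra_simps)
  moreover have "continuous_on {7*a/8..9*a/8} (perron_eval m a c :: real \<Rightarrow> real)"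
    unfolding perron_eval_def by (intro continuous_intros)
  ultimately show ?thesis
    using IVT'[of "perron_eval m a c" "7*a/8" 0 "9*a/8"] a that by auto
qed

lemma norm_inverse_power_diff_le:
  fixes z1 z2 :: "'a::real_normed_field"
  assumes b: "b > 0" and z1: "b \<le> norm z1" and z2: "b \<le> norm z2"
  shows "norm (inverse z1 ^ e - inverse z2 ^ e) \<le> e * norm (z1 - z2) / b^(e+1)"
proof -
  define w1 w2 where "w1 = of_real b * inverse z1" and "w2 = of_real b * inverse z2"
  have nz: "z1 \<noteq> 0" "z2 \<noteq> 0" using b z1 z2 by auto
  have "norm w1 = b / norm z1" "norm w2 = b / norm z2"
    using b by (simp_all add: w1_def w2_def norm_mult norm_inverse divide_inverse)
  then have "norm w1 \<le> 1" "norm w2 \<le> 1"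
    using b z1 z2 by (auto simp: divide_le_eq_1)
  then have "norm (w1^e - w2^e) \<le> e * norm (w1 - w2)" by (rule norm_power_diff)
  moreover have "w1 - w2 = of_real b * (z2 - z1) / (z1 * z2)"
    using nz by (simp add: w1_def w2_def field_simps)
  then have "norm (w1 - w2) = b * norm (z1 - z2) / (norm z1 * norm z2)"
    using b by (simp add: norm_mult norm_divide norm_minus_commute)
  moreover have "b * norm (z1 - z2) / (norm z1 * norm z2) \<le> norm (z1 - z2) / b"
  proof -
    have "b * b \<le> norm z1 * norm z2" using b z1 z2 by (intro mult_mono) auto
    then have "b * b / (norm z1 * norm z2) \<le> 1" using b nz by (simp add: divide_le_eq_1)
    moreover have "b * norm (z1 - z2) / (norm z1 * norm z2) = b * b / (norm z1 * norm z2) * (norm (z1 - z2) / b)"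
      using b by simp
    ultimately show ?thesis
      using b by (metis divide_nonneg_nonneg less_imp_le mult_left_le_one_le mult_nonneg_nonneg norm_ge_zero)
  qed
  ultimately have w_diff: "norm (w1^e - w2^e) \<le> e * norm (z1 - z2) / b"
    by (smt (verit) mult_left_mono of_nat_0_le_iff times_divide_eq_right)
  have "inverse z1 ^ e - inverse z2 ^ e = (w1^e - w2^e) / of_real b ^ e"
    using b by (simp add: w1_def w2_def field_simps)
  then have "norm (inverse z1 ^ e - inverse z2 ^ e) = norm (w1^e - w2^e) / b^e"
    using b by (simp add: norm_divide norm_power)
  also have "\<dots> \<le> e * norm (z1 - z2) / b / b^e"
    using w_diff b by (intro divide_right_mono) auto
  also have "\<dots> = e * norm (z1 - z2) / b^(e+1)"
    by simp
  finally show ?thesis .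
qed

lemma perron_eval_factor:
  fixes z :: "'a::real_normed_field"
  assumes "z \<noteq> 0"
  shows "perron_eval m a c z =
    z^Suc m * (z - of_real a + (\<Sum>i\<le>m. of_real (c i) * inverse z ^ (Suc m - i)))"
proof -
  have "z^Suc m * inverse z ^ (Suc m - i) = z^i" if "i \<le> m" for i
    using assms that by (simp add: power_diff field_simps)
  then have "z^Suc m * (\<Sum>i\<le>m. of_real (c i) * inverse z ^ (Suc m - i)) = (\<Sum>i\<le>m. of_real (c i) * z^i)"
    unfolding sum_distrib_left by (intro sum.cong) (auto simp: mult.left_commute)
  then show ?thesis unfolding perron_eval_def by (simp add: algebra_simps)
qed

text \<open>Writing a root as \<open>z = a - \<Sum>i\<le>m. c i * inverse z ^ (Suc m - i)\<close>, the right-hand side is a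
  contraction on \<open>a/2 \<le> norm z\<close>; hence there is at most one root there.\<close>

lemma perron_eval_root_unique:
  fixes z1 z2 :: "'a::real_normed_field"
  assumes tail: "small_tail m a c"
    and roots: "perron_eval m a c z1 = 0" "perron_eval m a c z2 = 0"
    and large: "a \<le> 2 * norm z1" "a \<le> 2 * norm z2"
  shows "z1 = z2"
proof -
  have a: "a > 0" and c: "\<And>i. i \<le> m \<Longrightarrow> \<bar>c i\<bar> \<le> a^(Suc (Suc m) - i) / tail_bound m"
    using tail unfolding small_tail_def by auto
  have nz: "z1 \<noteq> 0" "z2 \<noteq> 0" using a large by auto
  define d where "d = norm (z1 - z2)"
  define \<delta> where "\<delta> i = inverse z2 ^ (Suc m - i) - inverse z1 ^ (Suc m - i)" for i
  have fixed_point: "z = of_real a - (\<Sum>i\<le>m. of_real (c i) * inverse z ^ (Suc m - i))"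
    if "perron_eval m a c z = 0" "z \<noteq> 0" for z :: 'a
  proof -
    have "z - of_real a + (\<Sum>i\<le>m. of_real (c i) * inverse z ^ (Suc m - i)) = 0"
      using perron_eval_factor[OF that(2), of m a c] that by (metis mult_eq_0_iff power_eq_0_iff)
    then show ?thesis by (simp add: algebra_simps add_eq_0_iff2)
  qed
  have "z1 - z2 = (\<Sum>i\<le>m. of_real (c i) * \<delta> i)"
    using fixed_point[OF roots(1) nz(1)] fixed_point[OF roots(2) nz(2)]
    by (simp add: \<delta>_def algebra_simps sum_subtractf)
  then have "d \<le> (\<Sum>i\<le>m. \<bar>c i\<bar> * norm (\<delta> i))"
    unfolding d_def by (metis (no_types, lifting) norm_mult norm_of_real norm_sum sum.cong)
  also have "\<dots> \<le> (\<Sum>i\<le>m. (real m + 1) * 2^(m+2) * d / tail_bound m)"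
  proof (rule sum_mono)
    fix i assume "i \<in> {..m}"
    then have i: "i \<le> m" by simp
    define e where "e = Suc m - i"
    have e: "Suc (Suc m) - i = e + 1" "e \<le> m + 1" using i by (auto simp: e_def)
    have "norm (\<delta> i) \<le> e * d / (a/2)^(e+1)"
      unfolding \<delta>_def d_def e_def[symmetric] norm_minus_commute[of z1]
      using a large by (intro norm_inverse_power_diff_le) (auto simp: norm_minus_commute)
    then have "\<bar>c i\<bar> * norm (\<delta> i) \<le> a^(e+1) / tail_bound m * (e * d / (a/2)^(e+1))"
      using c[OF i] e by (intro mult_mono) (auto simp: d_def)
    also have "\<dots> = e * 2^(e+1) * d / tail_bound m"
      using a by (simp add: power_divide)
    also have "\<dots> \<le> (real m + 1) * 2^(m+2) * d / tail_bound m"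
    proof -
      have "real e * 2^(e+1) \<le> (real m + 1) * 2^(m+2)"
        using e by (intro mult_mono power_increasing) auto
      then show ?thesis
        using tail_bound_pos[of m] unfolding d_def by (intro divide_right_mono mult_right_mono) auto
    qed
    finally show "\<bar>c i\<bar> * norm (\<delta> i) \<le> (real m + 1) * 2^(m+2) * d / tail_bound m" .
  qed
  also have "\<dots> = d * ((real m + 1)^2 * 2^(m+2) / tail_bound m)"
    by (simp add: power2_eq_square)
  also have "\<dots> = d / 128"
    unfolding tail_bound_def by simp
  finally show ?thesis unfolding d_def by simp
qed

text \<open>The expression below is \<open>z\<close> times the derivative of \<open>perron_eval m a c\<close> at \<open>z\<close>.\<close>

lemma perron_eval_root_simple:
  fixes z :: "'a::real_normed_field"
  assumes tail: "small_tail m a c" and root: "perron_eval m a c z = 0" and large: "a \<le> 2 * norm z"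
  shows "of_nat (Suc (Suc m)) * z^Suc (Suc m) - of_nat (Suc m) * of_real a * z^Suc m
       + (\<Sum>i\<le>m. of_nat i * of_real (c i) * z^i) \<noteq> 0"
proof -
  define r where "r = norm z"
  have a: "a > 0" using tail unfolding small_tail_def by auto
  have r: "r > 0" "a \<le> 2 * r" using a large unfolding r_def by auto
  \<comment> \<open>subtracting \<open>(m+1)\<close> times the vanishing \<open>perron_eval m a c z\<close> leaves a dominant \<open>z^(m+2)\<close>\<close>
  define T where "T = (\<Sum>i\<le>m. (of_nat i - of_nat (Suc m)) * of_real (c i) * z^i)"
  have eq: "of_nat (Suc (Suc m)) * z^Suc (Suc m) - of_nat (Suc m) * of_real a * z^Suc m
       + (\<Sum>i\<le>m. of_nat i * of_real (c i) * z^i) = z^Suc (Suc m) + T + of_nat (Suc m) * perron_eval m a c z"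
    unfolding T_def perron_eval_def by (simp add: algebra_simps sum_distrib_left sum.distrib sum_subtractf)
  have "norm T \<le> (\<Sum>i\<le>m. (real m + 1) * (\<bar>c i\<bar> * r^i))"
    unfolding T_def
  proof (rule order.trans[OF norm_sum], rule sum_mono)
    fix i assume "i \<in> {..m}"
    then have "norm (of_nat i - of_nat (Suc m) :: 'a) = real (Suc m - i)"
      by (metis (no_types) atMost_iff le_SucI minus_diff_eq norm_minus_cancel norm_of_nat of_nat_diff)
    then show "norm ((of_nat i - of_nat (Suc m)) * of_real (c i) * z^i) \<le> (real m + 1) * (\<bar>c i\<bar> * r^i)"
      unfolding r_def by (simp add: norm_mult norm_power mult_right_mono mult.assoc)
  qed
  also have "\<dots> = (real m + 1) * (\<Sum>i\<le>m. \<bar>c i\<bar> * r^i)" by (simp add: sum_distrib_left)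
  also have "\<dots> \<le> a * r^(m+1) / 128" using small_tail_sum_le[OF tail r(2)] .
  also have "\<dots> < r^Suc (Suc m)" using r by (simp add: field_simps)
  also have "\<dots> = norm (z^Suc (Suc m))" unfolding r_def by (rule norm_power[symmetric])
  finally have "norm T < norm (z^Suc (Suc m))" .
  then have "z^Suc (Suc m) + T \<noteq> 0"
    by (metis add.commute add_eq_0_iff norm_minus_cancel order_less_irrefl)
  then show ?thesis unfolding eq using root by simp
qed

section \<open>Counting Perron polynomials\<close>

lemma poly_eq_sum_atMost:
  fixes x :: "'a::{comm_semiring_0,semiring_1}"
  assumes "degree p \<le> N"
  shows "poly p x = (\<Sum>i\<le>N. coeff p i * x^i)"
  unfolding poly_altdef
  by (rule sum.mono_neutral_left) (use assms in \<open>auto simp: coeff_eq_0 not_le\<close>)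

lemma times_poly_pderiv_eq_sum_atMost:
  fixes p :: "'a::{comm_semiring_1,semiring_no_zero_divisors,semiring_char_0} poly"
  assumes "degree p \<le> N"
  shows "x * poly (pderiv p) x = (\<Sum>i\<le>N. of_nat i * coeff p i * x^i)"
proof -
  have "degree (pderiv p) \<le> N" using assms degree_pderiv[of p] by linarith
  then have "x * poly (pderiv p) x = (\<Sum>i\<le>N. of_nat (Suc i) * coeff p (Suc i) * x^Suc i)"
    by (simp add: poly_eq_sum_atMost sum_distrib_left coeff_pderiv algebra_simps)
  also have "\<dots> = (\<Sum>i\<le>Suc N. of_nat i * coeff p i * x^i)"
    by (subst sum.atMost_Suc_shift) simp
  also have "\<dots> = (\<Sum>i\<le>N. of_nat i * coeff p i * x^i)"
    using assms by (simp add: coeff_eq_0)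
  finally show ?thesis .
qed

definition perron_poly :: "nat \<Rightarrow> int \<Rightarrow> (nat \<Rightarrow> int) \<Rightarrow> int poly" where
  "perron_poly m a c = Poly (map c [0..<Suc m] @ [-a, 1])"

lemma coeff_perron_poly: "coeff (perron_poly m a c) i =
  (if i \<le> m then c i else if i = Suc m then -a else if i = Suc (Suc m) then 1 else 0)"
  unfolding perron_poly_def coeff_Poly_eq nth_default_def
  by (auto simp: nth_append not_less le_Suc_eq less_Suc_eq)

lemma degree_perron_poly: "degree (perron_poly m a c) = Suc (Suc m)"
  by (rule antisym, rule degree_le) (auto simp: coeff_perron_poly intro: le_degree)

lemma lead_coeff_perron_poly: "lead_coeff (perron_poly m a c) = 1"
  by (simp add: degree_perron_poly coeff_perron_poly)

lemma poly_perron_poly: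
  "poly (map_poly complex_of_int (perron_poly m a c)) z = perron_eval m (of_int a) (of_int \<circ> c) z"
  by (subst poly_eq_sum_atMost[of _ "Suc (Suc m)"])
     (simp_all add: degree_map_poly degree_perron_poly coeff_map_poly coeff_perron_poly perron_eval_def)

lemma times_poly_pderiv_perron_poly:
  "z * poly (pderiv (map_poly complex_of_int (perron_poly m a c))) z =
     of_nat (Suc (Suc m)) * z^Suc (Suc m) - of_nat (Suc m) * of_real (of_int a) * z^Suc m
       + (\<Sum>i\<le>m. of_nat i * of_real ((of_int \<circ> c) i) * z^i)"
  by (subst times_poly_pderiv_eq_sum_atMost[of _ "Suc (Suc m)"])
     (simp_all add: degree_map_poly degree_perron_poly coeff_map_poly coeff_perron_poly)

lemma perron_poly_in_perron_polys:
  assumes a: "a \<ge> 2" "of_int a \<le> R/2" and tail: "small_tail m (of_int a) (of_int \<circ> c)"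
  shows "perron_poly m a c \<in> perron_polys (Suc (Suc m)) R"
proof -
  define F where "F = map_poly complex_of_int (perron_poly m a c)"
  have F: "poly F z = perron_eval m (of_int a) (of_int \<circ> c) z" for z
    unfolding F_def by (rule poly_perron_poly)
  obtain l :: real where l: "7 * of_int a / 8 \<le> l" "l \<le> 9 * of_int a / 8"
      "perron_eval m (of_int a) (of_int \<circ> c) l = 0"
    using perron_eval_real_root[OF tail] by blast
  define L where "L = complex_of_real l"
  have "l > 1" using l a by simp
  have root: "poly F L = 0" using l(3) unfolding F L_def perron_eval_of_real by simp
  have large: "of_int a \<le> 2 * cmod L" unfolding L_def using l a by simp
  have F0: "F \<noteq> 0" using degree_perron_poly[of m a c]
    by (metis F_def degree_0 degree_map_poly nat.distinct(1) of_int_eq_0_iff)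
  have "L * poly (pderiv F) L \<noteq> 0"
    unfolding F_def times_poly_pderiv_perron_poly
    using perron_eval_root_simple[OF tail _ large] root F by simp
  then have "order L (pderiv F) = 0" by (simp add: order_root)
  then have simple: "order L F = 1" using order_pderiv[OF F0 root] by simp
  have unique: "z = L" if "poly F z = 0" "of_int a \<le> 2 * cmod z" for z
    using perron_eval_root_unique[OF tail, of z L] that root large F by simp
  have "cmod z < l" if "poly F z = 0" "z \<noteq> L" for z
    using unique[OF that(1)] that(2) l a by force
  moreover have "cmod z \<le> R" if "poly F z = 0" for z
    using unique[OF that] l a unfolding L_def by (cases "of_int a \<le> 2 * cmod z") auto
  ultimately show ?thesis unfolding perron_polys_def
    using lead_coeff_perron_poly[of m a c] degree_perron_poly[of m a c] \<open>l > 1\<close> root simple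
    unfolding F_def L_def by blast
qed

lemma card_int_interval_ge: "y - x - 1 \<le> real (card {a::int. x \<le> of_int a \<and> of_int a \<le> y})"
proof -
  have "{a::int. x \<le> of_int a \<and> of_int a \<le> y} = {\<lceil>x\<rceil>..\<lfloor>y\<rfloor>}"
    by (auto simp: ceiling_le_iff le_floor_iff)
  moreover have "real_of_int \<lfloor>y\<rfloor> \<ge> y - 1" "real_of_int \<lceil>x\<rceil> \<le> x + 1" by linarith+
  ultimately show ?thesis by simp linarith
qed

lemma card_symmetric_int_interval_ge:
  assumes "x \<ge> 0"
  shows "x \<le> real (card {-\<lfloor>x\<rfloor>..\<lfloor>x\<rfloor>})"
proof -
  have "0 \<le> \<lfloor>x\<rfloor>" using assms by simp
  then have "real (card {-\<lfloor>x\<rfloor>..\<lfloor>x\<rfloor>}) = 2 * of_int \<lfloor>x\<rfloor> + 1" by simp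
  moreover have "x < of_int \<lfloor>x\<rfloor> + 1" by linarith
  ultimately show ?thesis using \<open>0 \<le> \<lfloor>x\<rfloor>\<close> by linarith
qed

lemma card_perron_polys_ge:
  fixes R :: real
  assumes R: "R \<ge> 16"
  shows "R / 8 * ((R/4)^(\<Sum>i\<le>m. Suc (Suc m) - i) / tail_bound m^(m+1))
     \<le> card (perron_polys (Suc (Suc m)) R)"
proof -
  define A where "A = {a::int. R/4 \<le> of_int a \<and> of_int a \<le> R/2}"
  define b where "b a i = \<lfloor>of_int a^(Suc (Suc m) - i) / tail_bound m\<rfloor>" for a :: int and i
  define S where "S = (SIGMA a:A. \<Pi>\<^sub>E i\<in>{..m}. {-b a i..b a i})"
  have finite_A: "finite A"
    unfolding A_def by (rule finite_subset[of _ "{\<lceil>R/4\<rceil>..\<lfloor>R/2\<rfloor>}"]) (auto simp: ceiling_le_iff le_floor_iff)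
  have inj: "inj_on (\<lambda>(a, c). perron_poly m a c) S"
  proof (rule inj_onI, clarify)
    fix a c a' c' assume ac: "(a, c) \<in> S" and ac': "(a', c') \<in> S"
      and eq: "perron_poly m a c = perron_poly m a' c'"
    have "a = a'" using arg_cong[OF eq, of "\<lambda>p. coeff p (Suc m)"] by (simp add: coeff_perron_poly)
    moreover have "c i = c' i" for i
    proof (cases "i \<le> m")
      case True
      then show ?thesis using arg_cong[OF eq, of "\<lambda>p. coeff p i"] by (simp add: coeff_perron_poly)
    next
      case False
      then show ?thesis using ac ac' unfolding S_def by (auto simp: PiE_def extensional_def)
    qed
    ultimately show "a = a' \<and> c = c'" by auto
  qed
  have into: "(\<lambda>(a, c). perron_poly m a c) ` S \<subseteq> perron_polys (Suc (Suc m)) R"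
  proof clarify
    fix a c assume ac: "(a, c) \<in> S"
    then have a: "R/4 \<le> of_int a" "of_int a \<le> R/2" unfolding S_def A_def by auto
    have c: "\<bar>c i\<bar> \<le> b a i" if "i \<le> m" for i
      using ac that unfolding S_def by (auto simp: PiE_iff abs_le_iff minus_le_iff)
    have "\<bar>of_int (c i)\<bar> \<le> of_int a^(Suc (Suc m) - i) / tail_bound m" if "i \<le> m" for i
      using c[OF that] le_floor_iff unfolding b_def by (metis of_int_abs)
    moreover have "of_int a > (0::real)" using a R by linarith
    ultimately have "small_tail m (of_int a) (of_int \<circ> c)"
      unfolding small_tail_def by simp
    moreover have "a \<ge> 2" using a R by linarith
    ultimately show "perron_poly m a c \<in> perron_polys (Suc (Suc m)) R"
      using perron_poly_in_perron_polys a by blast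
  qed
  have "finite (perron_polys (Suc (Suc m)) R)"
    using finite_card_root_bounded_monics[of R] perron_polys_subset_root_bounded_monics R
    by (meson finite_subset dual_order.trans one_le_numeral)
  then have card_le: "card S \<le> card (perron_polys (Suc (Suc m)) R)"
    using card_inj_on_le[OF inj into] by blast
  have "card S = (\<Sum>a\<in>A. card (\<Pi>\<^sub>E i\<in>{..m}. {-b a i..b a i}))"
    unfolding S_def using finite_A by (intro card_SigmaI) (auto intro: finite_PiE)
  also have "\<dots> = (\<Sum>a\<in>A. \<Prod>i\<le>m. card {-b a i..b a i})"
    by (intro sum.cong refl card_PiE) simp
  finally have "real (card S) = (\<Sum>a\<in>A. \<Prod>i\<le>m. real (card {-b a i..b a i}))"
    by (simp only: of_nat_sum of_nat_prod)
  with card_le have card_S: "(\<Sum>a\<in>A. \<Prod>i\<le>m. real (card {-b a i..b a i})) \<le> card (perron_polys (Suc (Suc m)) R)"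
    by linarith
  define P where "P = (\<Prod>i\<le>m. (R/4)^(Suc (Suc m) - i) / tail_bound m)"
  have "P \<le> (\<Prod>i\<le>m. real (card {-b a i..b a i}))" if "a \<in> A" for a
    unfolding P_def
  proof (rule prod_mono)
    fix i
    have "0 \<le> (R/4)^(Suc (Suc m) - i) / tail_bound m" using R tail_bound_pos[of m] by simp
    moreover have "(R/4)^(Suc (Suc m) - i) / tail_bound m \<le> of_int a^(Suc (Suc m) - i) / tail_bound m"
      using that R tail_bound_pos[of m] unfolding A_def by (intro divide_right_mono power_mono) auto
    moreover have "\<dots> \<le> real (card {-b a i..b a i})"
      unfolding b_def using calculation by (intro card_symmetric_int_interval_ge) linarith
    ultimately show "0 \<le> (R/4)^(Suc (Suc m) - i) / tail_bound m \<and>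
        (R/4)^(Suc (Suc m) - i) / tail_bound m \<le> real (card {-b a i..b a i})" by linarith
  qed
  then have "real (card A) * P \<le> (\<Sum>a\<in>A. \<Prod>i\<le>m. real (card {-b a i..b a i}))"
    using sum_mono[of A "\<lambda>_. P"] by simp
  moreover have "R/8 * P \<le> real (card A) * P"
    using card_int_interval_ge[of "R/2" "R/4"] R tail_bound_pos[of m] unfolding A_def P_def
    by (intro mult_right_mono prod_nonneg) auto
  ultimately have "R/8 * P \<le> card (perron_polys (Suc (Suc m)) R)" using card_S by linarith
  moreover have "P = (R/4)^(\<Sum>i\<le>m. Suc (Suc m) - i) / tail_bound m^(m+1)"
    unfolding P_def by (simp add: prod_dividef power_sum)
  ultimately show ?thesis by simp
qed

lemma monic_degree_one_irreducible:
  fixes p :: "int poly"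
  assumes "lead_coeff p = 1" "degree p = 1"
  shows "irreducible p"
proof (rule ccontr)
  assume "\<not> irreducible p"
  then obtain f g where "p = f * g" "lead_coeff f = 1" "lead_coeff g = 1" "degree f \<noteq> 0" "degree g \<noteq> 0"
    using assms reducible_monic_int_poly_factor by (metis zero_neq_one)
  moreover have "f \<noteq> 0" "g \<noteq> 0" using calculation by auto
  ultimately have "degree p = degree f + degree g" by (simp add: degree_mult_eq)
  then show False using assms \<open>degree f \<noteq> 0\<close> \<open>degree g \<noteq> 0\<close> by simp
qed

lemma card_reducible_perron_polys_le:
  assumes "n \<ge> 1"
  obtains C where "\<And>R. R \<ge> 1 \<Longrightarrow>
    real (card {p \<in> perron_polys n R. \<not> irreducible p}) \<le> C * R^((\<Sum>j<n. n - j) - 1)"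
proof
  fix R :: real assume R: "R \<ge> 1"
  have "finite {p \<in> root_bounded_monics n R. \<not> irreducible p}"
    using finite_card_root_bounded_monics[OF R] by auto
  then have "real (card {p \<in> perron_polys n R. \<not> irreducible p})
      \<le> real (card {p \<in> root_bounded_monics n R. \<not> irreducible p})"
    unfolding of_nat_le_iff by (rule card_mono) (use perron_polys_subset_root_bounded_monics in blast)
  also have "\<dots> \<le> (\<Sum>k\<in>{1..<n}. (3*2^k)^k * (3*2^(n-k))^(n-k)) * R^((\<Sum>j<n. n - j) - 1)"
    by (rule card_reducible_root_bounded_monics_le[OF R assms])
  finally show "real (card {p \<in> perron_polys n R. \<not> irreducible p})
      \<le> (\<Sum>k\<in>{1..<n}. (3*2^k)^k * (3*2^(n-k))^(n-k)) * R^((\<Sum>j<n. n - j) - 1)" .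
qed

lemma card_perron_polys_ge_power:
  assumes "n \<ge> 2"
  obtains c where "c > 0" "\<And>R. R \<ge> 16 \<Longrightarrow> c * R^(\<Sum>j<n. n - j) \<le> card (perron_polys n R)"
proof -
  define m where "m = n - 2"
  have n: "n = Suc (Suc m)" using assms unfolding m_def by simp
  define e where "e = (\<Sum>i\<le>m. Suc (Suc m) - i)"
  define c where "c = 1 / (8 * 4^e * tail_bound m^(m+1))"
  have "(\<Sum>j<n. n - j) = e + 1" unfolding n e_def by (simp add: lessThan_Suc_atMost[symmetric])
  show ?thesis
  proof (rule that)
    show "c > 0" unfolding c_def using tail_bound_pos[of m] by simp
    fix R :: real assume "R \<ge> 16"
    have "c * R^(\<Sum>j<n. n - j) = R / 8 * ((R/4)^e / tail_bound m^(m+1))"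
      unfolding \<open>(\<Sum>j<n. n - j) = e + 1\<close> c_def by (simp add: field_simps)
    also have "\<dots> \<le> card (perron_polys n R)"
      using card_perron_polys_ge[OF \<open>R \<ge> 16\<close>, of m] unfolding n e_def .
    finally show "c * R^(\<Sum>j<n. n - j) \<le> card (perron_polys n R)" .
  qed
qed

lemma tendsto_ratio_zero_if_power_bounds:
  fixes f g :: "real \<Rightarrow> real"
  assumes "c > 0" "e \<ge> 1"
    and f: "eventually (\<lambda>R. 0 \<le> f R \<and> f R \<le> C * R^(e - 1)) at_top"
    and g: "eventually (\<lambda>R. c * R^e \<le> g R) at_top"
  shows "((\<lambda>R. f R / g R) \<longlongrightarrow> 0) at_top"
proof (rule tendsto_sandwich[OF _ _ tendsto_const])
  show "eventually (\<lambda>R. 0 \<le> f R / g R) at_top"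
    using f g eventually_gt_at_top[of 0]
    by eventually_elim (metis assms(1) divide_nonneg_pos order_less_le_trans zero_less_mult_iff zero_less_power)
  show "eventually (\<lambda>R. f R / g R \<le> (C / c) / R) at_top"
    using f g eventually_gt_at_top[of 0]
  proof eventually_elim
    case (elim R)
    have "R^e = R * R^(e - 1)" using \<open>e \<ge> 1\<close> by (simp flip: power_Suc)
    then have "f R / g R \<le> C * R^(e - 1) / (c * (R * R^(e - 1)))"
      using elim \<open>c > 0\<close> by (intro frac_le) auto
    then show ?case using \<open>c > 0\<close> elim by (simp add: field_simps)
  qed
  show "((\<lambda>R. (C / c) / R) \<longlongrightarrow> 0) at_top"
    by (rule tendsto_divide_0[OF tendsto_const])
       (rule filterlim_at_top_imp_at_infinity[OF filterlim_ident])
qed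

theorem lemma7:
  fixes n :: nat
  assumes "n \<ge> 1"
  shows "((\<lambda>R. real (card {p \<in> perron_polys n R. \<not> irreducible p}) / real (card (perron_polys n R)))
           \<longlongrightarrow> 0) at_top"
proof (cases "n = 1")
  case True
  then have none: "{p \<in> perron_polys n R. \<not> irreducible p} = {}" for R
    using monic_degree_one_irreducible unfolding perron_polys_def by auto
  then have "(\<lambda>R. real (card {p \<in> perron_polys n R. \<not> irreducible p}) / real (card (perron_polys n R)))
      = (\<lambda>_. 0)" by (simp only: none card.empty of_nat_0 div_0)
  then show ?thesis by simp
next
  case False
  define e where "e = (\<Sum>j<n. n - j)"
  have "n - 0 \<le> e" unfolding e_def by (rule member_le_sum) (use assms in auto)
  then have "e \<ge> 1" using assms by simp
  obtain C where upper: "\<And>R. R \<ge> 1 \<Longrightarrow> real (card {p \<in> perron_polys n R. \<not> irreducible p}) \<le> C * R^(e - 1)"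
    using card_reducible_perron_polys_le[OF assms] unfolding e_def by blast
  have "n \<ge> 2" using assms False by simp
  then obtain c where "c > 0" and lower: "\<And>R. R \<ge> 16 \<Longrightarrow> c * R^e \<le> card (perron_polys n R)"
    using card_perron_polys_ge_power unfolding e_def by blast
  show ?thesis
  proof (rule tendsto_ratio_zero_if_power_bounds[OF \<open>c > 0\<close> \<open>e \<ge> 1\<close>])
    show "eventually (\<lambda>R. 0 \<le> real (card {p \<in> perron_polys n R. \<not> irreducible p})
        \<and> real (card {p \<in> perron_polys n R. \<not> irreducible p}) \<le> C * R^(e - 1)) at_top"
      using eventually_ge_at_top[of "1::real"] by eventually_elim (metis of_nat_0_le_iff upper)
    show "eventually (\<lambda>R. c * R^e \<le> real (card (perron_polys n R))) at_top"
      using eventually_ge_at_top[of "16::real"] by eventually_elim (rule lower)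
  qed
qed

end
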